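(* Let $\vec\psi$ satisfy (H1) and let $\mu$ be a unimodular probability measure on $\mathcal T_*$. For every compact region $K$ of $(\beta,B)$ there is a deterministic $C<\infty$ such that for $(\beta,B)\in K$ and $T\in\mathcal T_*$: (a) $|\Phi_T(\beta,B,h)|\le C(D_o^2+1)$ for every $h\in\mathcal H^\star_\mu(\beta,B)$; (b) if moreover $\psi>0$ everywhere, then $|\Phi_T(\beta,B,h)|\le C(D_o+1)$ for every message $h$. Consequently, on compact regions, $\Phi_\mu$ is uniformly bounded on $\mathcal H^\star_\mu$ whenever $\mathbb E_\mu[D_o^2]<\infty$, and, if $\psi>0$, uniformly bounded on all messages whenever $\mathbb E_\mu[D_o]<\infty$.
   Context: $\mathcal T_*$: rooted locally finite trees $(T,o)$ up to isomorphism; $\partial v$ neighbours, $D_v=|\partial v|$. A measure $\mu$ on rooted graphs is unimodular if $\mathbb E_\mu[\sum_x f(T,o,x)]=\mathbb E_\mu[\sum_x f(T,x,o)]$ for all nonnegative Borel $f$ on doubly-rooted graphs. $\mathcal T_\to$: trees rooted at a directed edge; $\mu^\uparrow$: law of $(T,J\to o)$, $T\sim\mu$ conditioned on $D_o\ge1$, $J$ uniform on $\partial o$. Specification: finite $\mathscr X$, symmetric $\psi^\beta:\mathscr X^2\to[0,\infty)$, $\bar\psi^B:\mathscr X\to[0,\infty)$; $\xi=\log\psi$, $\bar\xi=\log\bar\psi$. (H1): $\bar\psi^B>0$; some $\sigma^{\mathrm{perm}}$ has $\min_\sigma\psi^\beta(\sigma,\sigma^{\mathrm{perm}})>0$; $\bar\xi^B(\sigma)$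 is $C^1$ in $B$; each $\xi^\beta(\sigma,\sigma')$ is $\equiv-\infty$ or finite and $C^1$ in $\beta$. A message is a measurable $(T,x\to y)\mapsto h_{x\to y}\in\Delta_{\mathscr X}$ mod $\mu^\uparrow$-null sets. $\mathcal H^\star_\mu(\beta,B)$: messages with $h_{x\to y}(\sigma)\propto\bar\psi^B(\sigma)\prod_{v\in\partial x\setminus y}\sum_{\sigma_v}\psi^\beta(\sigma,\sigma_v)h_{v\to x}(\sigma_v)$ $\mu^\uparrow$-a.s. Bethe functional: $\Phi_T(\beta,B,h)=\log\{\sum_\sigma\bar\psi(\sigma)\prod_{j\in\partial o}\sum_{\sigma_j}\psi(\sigma,\sigma_j)h_{j\to o}(\sigma_j)\}-\frac12\sum_{j\in\partial o}\log\{\sum_{\sigma,\sigma_j}\psi(\sigma,\sigma_j)h_{j\to o}(\sigma_j)h_{o\to j}(\sigma)\}$ (empty product $=1$, empty sum $=0$), $\Phi_\mu=\mathbb E_\mu\Phi_T$. *)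

theory Defs
  imports "HOL-Probability.Probability"
begin

text \<open>A (possibly rooted) locally finite graph is represented by an adjacency
relation on nat. Only the connected component of the root matters. Objects on
the quotient space of isomorphism classes are represented by isomorphism-invariant
measurable objects on representatives.\<close>

type_synonym graph = "nat \<Rightarrow> nat \<Rightarrow> bool"

definition nbrs :: "graph \<Rightarrow> nat \<Rightarrow> nat set" where
  "nbrs G v = {u. G v u}"

definition deg :: "graph \<Rightarrow> nat \<Rightarrow> nat" where
  "deg G v = card (nbrs G v)"

definition comp :: "graph \<Rightarrow> nat \<Rightarrow> nat set" where
  "comp G r = {v. (r, v) \<in> {(a, b). G a b}\<^sup>*}"

definition has_cycle_in :: "graph \<Rightarrow> nat set \<Rightarrow> bool" where
  "has_cycle_in G V \<longleftrightarrow> (\<exists>vs. 3 \<le> length vs \<and> distinct vs \<and> set vs \<subseteq> V \<and>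
      (\<forall>i. Suc i < length vs \<longrightarrow> G (vs ! i) (vs ! Suc i)) \<and> G (last vs) (hd vs))"

text \<open>(G,o) represents an element of T_*: the component of o is a locally finite tree.\<close>
definition is_lf_tree :: "graph \<Rightarrow> nat \<Rightarrow> bool" where
  "is_lf_tree G r \<longleftrightarrow>
     (\<forall>u\<in>comp G r. \<forall>v. G u v \<longleftrightarrow> G v u) \<and>
     (\<forall>u\<in>comp G r. \<not> G u u) \<and>
     (\<forall>u\<in>comp G r. finite (nbrs G u)) \<and>
     \<not> has_cycle_in G (comp G r)"

definition driso :: "graph \<Rightarrow> nat \<Rightarrow> nat \<Rightarrow> graph \<Rightarrow> nat \<Rightarrow> nat \<Rightarrow> bool" where
  "driso G a b G' a' b' \<longleftrightarrow> b \<in> comp G a \<and> b' \<in> comp G' a' \<and>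
     (\<exists>f. bij_betw f (comp G a) (comp G' a') \<and>
          (\<forall>u\<in>comp G a. \<forall>v\<in>comp G a. G u v \<longleftrightarrow> G' (f u) (f v)) \<and>
          f a = a' \<and> f b = b')"

definition invariant2 :: "(graph \<Rightarrow> nat \<Rightarrow> nat \<Rightarrow> 'b) \<Rightarrow> bool" where
  "invariant2 F \<longleftrightarrow> (\<forall>G a b G' a' b'. driso G a b G' a' b' \<longrightarrow> F G a b = F G' a' b')"

definition graph_meas :: "graph measure" where
  "graph_meas = Pi\<^sub>M UNIV (\<lambda>_::nat. Pi\<^sub>M UNIV (\<lambda>_::nat. count_space (UNIV::bool set)))"

definition rgraph_space :: "(graph \<times> nat) measure" where
  "rgraph_space = graph_meas \<Otimes>\<^sub>M count_space UNIV"

definition drgraph_space :: "(graph \<times> nat \<times> nat) measure" where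
  "drgraph_space = graph_meas \<Otimes>\<^sub>M (count_space UNIV \<Otimes>\<^sub>M count_space UNIV)"

text \<open>Unimodularity (mass transport principle), for nonnegative Borel functions on
doubly rooted graphs (i.e. isomorphism-invariant measurable functions).\<close>
definition unimodular :: "(graph \<times> nat) measure \<Rightarrow> bool" where
  "unimodular \<mu> \<longleftrightarrow>
     (\<forall>f::graph \<times> nat \<times> nat \<Rightarrow> ennreal. f \<in> borel_measurable drgraph_space \<longrightarrow>
        invariant2 (\<lambda>G a b. f (G, a, b)) \<longrightarrow>
        (\<integral>\<^sup>+ z. (\<integral>\<^sup>+ x. f (fst z, snd z, x) \<partial>count_space (comp (fst z) (snd z))) \<partial>\<mu>) =
        (\<integral>\<^sup>+ z. (\<integral>\<^sup>+ x. f (fst z, x, snd z) \<partial>count_space (comp (fst z) (snd z))) \<partial>\<mu>))"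

definition unimod_prob_on_trees :: "(graph \<times> nat) measure \<Rightarrow> bool" where
  "unimod_prob_on_trees \<mu> \<longleftrightarrow> prob_space \<mu> \<and> sets \<mu> = sets rgraph_space \<and>
     (AE z in \<mu>. is_lf_tree (fst z) (snd z)) \<and> unimodular \<mu>"

text \<open>psi beta s s' = psi^beta(s,s'), psib B s = bar psi^B(s).\<close>
definition H1 :: "(real \<Rightarrow> 'x::finite \<Rightarrow> 'x \<Rightarrow> real) \<Rightarrow> (real \<Rightarrow> 'x \<Rightarrow> real) \<Rightarrow> bool" where
  "H1 psi psib \<longleftrightarrow>
     (\<forall>b s s'. 0 \<le> psi b s s' \<and> psi b s s' = psi b s' s) \<and>
     (\<forall>B s. 0 < psib B s) \<and>
     (\<exists>sp. \<forall>b. 0 < Min (range (\<lambda>s. psi b s sp))) \<and>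
     (\<forall>s. (\<lambda>B. ln (psib B s)) C1_differentiable_on UNIV) \<and>
     (\<forall>s s'. (\<forall>b. psi b s s' = 0) \<or>
             ((\<forall>b. 0 < psi b s s') \<and> (\<lambda>b. ln (psi b s s')) C1_differentiable_on UNIV))"

text \<open>A message: h G x y is the message h_{x->y} on the tree rooted at the directed
edge x->y; it is a probability vector, measurable and isomorphism invariant.\<close>
definition is_message :: "(graph \<Rightarrow> nat \<Rightarrow> nat \<Rightarrow> 'x::finite \<Rightarrow> real) \<Rightarrow> bool" where
  "is_message h \<longleftrightarrow>
     (\<forall>G x y. (\<forall>s. 0 \<le> h G x y s) \<and> (\<Sum>s\<in>UNIV. h G x y s) = 1) \<and>
     (\<forall>s. (\<lambda>z. h (fst z) (fst (snd z)) (snd (snd z)) s) \<in> borel_measurable drgraph_space) \<and>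
     invariant2 h"

definition bp_at :: "(real \<Rightarrow> 'x::finite \<Rightarrow> 'x \<Rightarrow> real) \<Rightarrow> (real \<Rightarrow> 'x \<Rightarrow> real) \<Rightarrow> real \<Rightarrow> real \<Rightarrow>
    (graph \<Rightarrow> nat \<Rightarrow> nat \<Rightarrow> 'x \<Rightarrow> real) \<Rightarrow> graph \<Rightarrow> nat \<Rightarrow> nat \<Rightarrow> bool" where
  "bp_at psi psib b B h G x y \<longleftrightarrow>
     (\<exists>c>0. \<forall>s. h G x y s =
        c * psib B s * (\<Prod>v\<in>nbrs G x - {y}. \<Sum>sv\<in>UNIV. psi b s sv * h G v x sv))"

text \<open>A property holds mu^up-a.s. iff for mu-a.e. (G,o), it holds at (G, j->o) for all
neighbours j of o (J is uniform on the finite set of neighbours).\<close>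
definition AE_up :: "(graph \<times> nat) measure \<Rightarrow> (graph \<Rightarrow> nat \<Rightarrow> nat \<Rightarrow> bool) \<Rightarrow> bool" where
  "AE_up \<mu> P \<longleftrightarrow> (AE z in \<mu>. \<forall>j\<in>nbrs (fst z) (snd z). P (fst z) j (snd z))"

definition Hstar :: "(graph \<times> nat) measure \<Rightarrow> (real \<Rightarrow> 'x::finite \<Rightarrow> 'x \<Rightarrow> real) \<Rightarrow>
    (real \<Rightarrow> 'x \<Rightarrow> real) \<Rightarrow> real \<Rightarrow> real \<Rightarrow> (graph \<Rightarrow> nat \<Rightarrow> nat \<Rightarrow> 'x \<Rightarrow> real) set" where
  "Hstar \<mu> psi psib b B = {h. is_message h \<and> AE_up \<mu> (bp_at psi psib b B h)}"

definition Phi :: "(real \<Rightarrow> 'x::finite \<Rightarrow> 'x \<Rightarrow> real) \<Rightarrow> (real \<Rightarrow> 'x \<Rightarrow> real) \<Rightarrow> real \<Rightarrow> real \<Rightarrow>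
    (graph \<Rightarrow> nat \<Rightarrow> nat \<Rightarrow> 'x \<Rightarrow> real) \<Rightarrow> graph \<Rightarrow> nat \<Rightarrow> real" where
  "Phi psi psib b B h G r =
     ln (\<Sum>s\<in>UNIV. psib B s * (\<Prod>j\<in>nbrs G r. \<Sum>sj\<in>UNIV. psi b s sj * h G j r sj))
     - (1/2) * (\<Sum>j\<in>nbrs G r. ln (\<Sum>s\<in>UNIV. \<Sum>sj\<in>UNIV. psi b s sj * h G j r sj * h G r j s))"

definition Phi_mu :: "(graph \<times> nat) measure \<Rightarrow> (real \<Rightarrow> 'x::finite \<Rightarrow> 'x \<Rightarrow> real) \<Rightarrow>
    (real \<Rightarrow> 'x \<Rightarrow> real) \<Rightarrow> real \<Rightarrow> real \<Rightarrow> (graph \<Rightarrow> nat \<Rightarrow> nat \<Rightarrow> 'x \<Rightarrow> real) \<Rightarrow> real" where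
  "Phi_mu \<mu> psi psib b B h = (\<integral> z. Phi psi psib b B h (fst z) (snd z) \<partial>\<mu>)"

end

theory Submission
  imports Defs
begin

text \<open>
  Write D for the degree of the root o, Z for the vertex partition function at o, and E_j for the
  edge partition function of the edge o--j, so that Phi = ln Z - 1/2 sum_j ln E_j.
  Uniform constants from (H1) on the compact region (continuity, positivity of the permissive
  column) give |ln Z| <= L (D + 1) for every message.  For the edge terms:
  (a) if the message o->j satisfies BP, then E_j = Z / Z_{-j}, where Z_{-j} omits the neighbour j,
      so |ln E_j| <= 2 L (D + 1) and |Phi| = O(D^2);
  (b) if psi > 0, each E_j is an average of values of psi, so |ln E_j| is bounded and |Phi| = O(D).
  A message in Hstar only satisfies BP for the incoming messages j->o; the outgoing ones are
  obtained from unimodularity by a mass transport argument applied to the isomorphism-invariant,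
  measurable "BP defect" relation.  Integrating the pointwise bounds against mu gives the
  statements about Phi_mu.
\<close>

section \<open>Elementary estimates on partition functions\<close>

lemma abs_ln_le_log_ratio:
  fixes x :: real
  assumes "0 < a" "a \<le> x" "x \<le> b" "a \<le> 1" "1 \<le> b"
  shows "\<bar>ln x\<bar> \<le> ln b - ln a"
proof -
  have "ln a \<le> ln x" "ln x \<le> ln b" using assms by auto
  moreover have "ln a \<le> 0" "0 \<le> ln b" using assms by auto
  ultimately show ?thesis by linarith
qed

definition prob_vector :: "('x::finite \<Rightarrow> real) \<Rightarrow> bool" where
  "prob_vector q \<longleftrightarrow> (\<forall>s. 0 \<le> q s) \<and> (\<Sum>s\<in>UNIV. q s) = 1"

lemma weighted_average_bounds:
  fixes q f :: "'x::finite \<Rightarrow> real"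
  assumes "prob_vector q"
  shows "(\<forall>s. lo \<le> f s) \<Longrightarrow> lo \<le> (\<Sum>s\<in>UNIV. f s * q s)"
    and "(\<forall>s. f s \<le> hi) \<Longrightarrow> (\<Sum>s\<in>UNIV. f s * q s) \<le> hi"
proof -
  have q: "\<forall>s. 0 \<le> q s" "(\<Sum>s\<in>UNIV. q s) = 1" using assms unfolding prob_vector_def by auto
  have mean: "(\<Sum>s\<in>UNIV. c * q s) = c" for c using q by (simp add: sum_distrib_left[symmetric])
  show "lo \<le> (\<Sum>s\<in>UNIV. f s * q s)" if "\<forall>s. lo \<le> f s"
    using sum_mono[of UNIV "\<lambda>s. lo * q s" "\<lambda>s. f s * q s"] that q mean[of lo]
    by (simp add: mult_right_mono)
  show "(\<Sum>s\<in>UNIV. f s * q s) \<le> hi" if "\<forall>s. f s \<le> hi"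
    using sum_mono[of UNIV "\<lambda>s. f s * q s" "\<lambda>s. hi * q s"] that q mean[of hi]
    by (simp add: mult_right_mono)
qed

definition log_spread :: "'x::finite itself \<Rightarrow> real \<Rightarrow> real \<Rightarrow> real \<Rightarrow> real \<Rightarrow> real" where
  "log_spread _ M m lo hi = ln (real CARD('x) * hi) - ln lo + ln M - ln m"

lemma log_spread_nonneg:
  assumes "0 < m" "m \<le> 1" "1 \<le> M" "0 < lo" "lo \<le> 1" "1 \<le> hi"
  shows "0 \<le> log_spread TYPE('x::finite) M m lo hi"
proof -
  have "1 \<le> real CARD('x) * hi" using mult_mono[of 1 "real CARD('x)" 1 hi] assms
    by (simp add: Suc_le_eq)
  then have "0 \<le> ln (real CARD('x) * hi)" by simp
  moreover have "ln lo \<le> 0" "0 \<le> ln M" "ln m \<le> 0" using assms by auto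
  ultimately show ?thesis unfolding log_spread_def by linarith
qed

text \<open>Two-sided bounds for a partition function with D factors: the state sp guarantees a
lower bound lo m^D, while all factors are at most M.\<close>
lemma partition_bounds:
  fixes a :: "nat \<Rightarrow> 'x::finite \<Rightarrow> real" and w :: "'x \<Rightarrow> real"
  assumes N: "finite N" "card N \<le> D"
    and a: "\<forall>v\<in>N. \<forall>s. 0 \<le> a v s \<and> a v s \<le> M" "\<forall>v\<in>N. m \<le> a v sp"
    and w: "\<forall>s. lo \<le> w s \<and> w s \<le> hi"
    and c: "0 < m" "m \<le> 1" "1 \<le> M" "0 < lo"
  shows "lo * m ^ D \<le> (\<Sum>s\<in>UNIV. w s * (\<Prod>v\<in>N. a v s))"
    and "(\<Sum>s\<in>UNIV. w s * (\<Prod>v\<in>N. a v s)) \<le> real CARD('x) * hi * M ^ D"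
proof -
  have terms_nonneg: "0 \<le> w s * (\<Prod>v\<in>N. a v s)" for s
    using w a c by (intro mult_nonneg_nonneg prod_nonneg) (auto intro: order_trans[of 0 lo])
  have "m ^ D \<le> m ^ card N" using power_decreasing[OF N(2), of m] c by simp
  also have "\<dots> = (\<Prod>v\<in>N. m)" by simp
  also have "\<dots> \<le> (\<Prod>v\<in>N. a v sp)" using a c by (intro prod_mono) auto
  finally have "lo * m ^ D \<le> w sp * (\<Prod>v\<in>N. a v sp)"
    using w c by (intro mult_mono) (auto intro: order_trans[of 0 lo])
  also have "\<dots> \<le> (\<Sum>s\<in>UNIV. w s * (\<Prod>v\<in>N. a v s))"
    by (rule member_le_sum) (use terms_nonneg in auto)
  finally show "lo * m ^ D \<le> (\<Sum>s\<in>UNIV. w s * (\<Prod>v\<in>N. a v s))" .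
  have "w s * (\<Prod>v\<in>N. a v s) \<le> hi * M ^ D" for s
  proof -
    have "(\<Prod>v\<in>N. a v s) \<le> (\<Prod>v\<in>N. M)" using a by (intro prod_mono) auto
    also have "\<dots> \<le> M ^ D" using power_increasing[OF N(2), of M] c by simp
    finally show ?thesis using w a c by (intro mult_mono) (auto intro: prod_nonneg)
  qed
  then have "(\<Sum>s\<in>UNIV. w s * (\<Prod>v\<in>N. a v s)) \<le> (\<Sum>s\<in>(UNIV::'x set). hi * M ^ D)"
    by (intro sum_mono) auto
  then show "(\<Sum>s\<in>UNIV. w s * (\<Prod>v\<in>N. a v s)) \<le> real CARD('x) * hi * M ^ D" by simp
qed

lemma partition_log_bound:
  fixes a :: "nat \<Rightarrow> 'x::finite \<Rightarrow> real" and w :: "'x \<Rightarrow> real"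
  assumes N: "finite N" "card N \<le> D"
    and a: "\<forall>v\<in>N. \<forall>s. 0 \<le> a v s \<and> a v s \<le> M" "\<forall>v\<in>N. m \<le> a v sp"
    and w: "\<forall>s. lo \<le> w s \<and> w s \<le> hi"
    and c: "0 < m" "m \<le> 1" "1 \<le> M" "0 < lo" "lo \<le> 1" "1 \<le> hi"
  shows "\<bar>ln (\<Sum>s\<in>UNIV. w s * (\<Prod>v\<in>N. a v s))\<bar> \<le> log_spread TYPE('x) M m lo hi * (real D + 1)"
proof -
  have card: "1 \<le> real CARD('x)" by (simp add: Suc_le_eq)
  have lo_pos: "0 < lo * m ^ D" using c by simp
  have card_hi: "1 \<le> real CARD('x) * hi" using mult_mono[OF card c(6)] by simp
  have hi_ge: "1 \<le> real CARD('x) * hi * M ^ D"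
    using card_hi one_le_power[OF c(3), of D] mult_mono[of 1 "real CARD('x) * hi" 1 "M ^ D"] by simp
  have lo_le: "lo * m ^ D \<le> 1" using c by (simp add: mult_le_one power_le_one)
  have "\<bar>ln (\<Sum>s\<in>UNIV. w s * (\<Prod>v\<in>N. a v s))\<bar> \<le> ln (real CARD('x) * hi * M ^ D) - ln (lo * m ^ D)"
    by (rule abs_ln_le_log_ratio[OF lo_pos partition_bounds[OF N a w c(1-4)] lo_le hi_ge])
  also have "\<dots> = ln (real CARD('x) * hi) - ln lo + real D * (ln M - ln m)"
    using c card by (simp add: ln_mult ln_realpow algebra_simps)
  also have "\<dots> \<le> log_spread TYPE('x) M m lo hi * (real D + 1)"
  proof -
    have "0 \<le> ln (real CARD('x) * hi) - ln lo" "0 \<le> ln M - ln m"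
      using card_hi c by auto
    then have "0 \<le> real D * (ln (real CARD('x) * hi) - ln lo) + (ln M - ln m)" by simp
    then show ?thesis unfolding log_spread_def by (simp add: algebra_simps)
  qed
  finally show ?thesis .
qed

section \<open>Uniform constants from (H1) on compact parameter regions\<close>

lemma compact_family_upper_bound:
  fixes f :: "'i::finite \<Rightarrow> 'a::topological_space \<Rightarrow> real"
  assumes "compact S" "\<And>i. continuous_on S (f i)"
  shows "\<exists>M\<ge>1. \<forall>i. \<forall>x\<in>S. f i x \<le> M"
proof -
  have "compact (\<Union>i. f i ` S)" using assms by (intro compact_UN compact_continuous_image) auto
  then obtain a where a: "\<forall>y\<in>(\<Union>i. f i ` S). \<bar>y\<bar> \<le> a"
    using compact_imp_bounded bounded_real by metis
  have "f i x \<le> max 1 a" if "x \<in> S" for i x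
  proof -
    have "\<bar>f i x\<bar> \<le> a" using a that by blast
    then show ?thesis by linarith
  qed
  then show ?thesis by (intro exI[of _ "max 1 a"]) auto
qed

lemma compact_family_positive_lower_bound:
  fixes f :: "'i::finite \<Rightarrow> 'a::topological_space \<Rightarrow> real"
  assumes "compact S" "\<And>i. continuous_on S (f i)" "\<And>i x. x \<in> S \<Longrightarrow> 0 < f i x"
  shows "\<exists>m>0. m \<le> 1 \<and> (\<forall>i. \<forall>x\<in>S. m \<le> f i x)"
proof (cases "S = {}")
  case False
  have "compact (\<Union>i. f i ` S)" using assms by (intro compact_UN compact_continuous_image) auto
  moreover have "(\<Union>i. f i ` S) \<noteq> {}" using False by blast
  ultimately obtain y0 where "y0 \<in> (\<Union>i. f i ` S)" "\<forall>y\<in>(\<Union>i. f i ` S). y0 \<le> y"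
    using compact_attains_inf by meson
  moreover have "0 < y0" using calculation(1) assms(3) by blast
  ultimately have "0 < min 1 y0 \<and> min 1 y0 \<le> 1 \<and> (\<forall>i. \<forall>x\<in>S. min 1 y0 \<le> f i x)"
    by (auto intro: min.coboundedI2)
  then show ?thesis by blast
qed (auto intro: exI[of _ 1])

text \<open>Under (H1) every interaction and every external field is continuous in its parameter: it is
either identically zero or the exponential of a C1 function.\<close>
lemma H1_continuous:
  assumes "H1 psi psib"
  shows "continuous_on S (\<lambda>b. psi b s s')" and "continuous_on S (\<lambda>B. psib B s)"
proof -
  have exp_ln: "continuous_on S g" if "\<forall>x. 0 < g x" "(\<lambda>x. ln (g x)) C1_differentiable_on UNIV"
    for g :: "real \<Rightarrow> real"
  proof -
    have "continuous_on UNIV (\<lambda>x. exp (ln (g x)))"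
      using that by (intro continuous_on_exp C1_differentiable_imp_continuous_on) auto
    then have "continuous_on UNIV g" using that(1) by simp
    then show ?thesis by (rule continuous_on_subset) simp
  qed
  from assms have "(\<forall>b. psi b s s' = 0) \<or> ((\<forall>b. 0 < psi b s s') \<and> (\<lambda>b. ln (psi b s s')) C1_differentiable_on UNIV)"
    unfolding H1_def by blast
  then show "continuous_on S (\<lambda>b. psi b s s')" using exp_ln by (auto simp: continuous_on_const)
  show "continuous_on S (\<lambda>B. psib B s)" by (rule exp_ln) (use assms in \<open>auto simp: H1_def\<close>)
qed

definition spec_bounds :: "(real \<Rightarrow> 'x::finite \<Rightarrow> 'x \<Rightarrow> real) \<Rightarrow> (real \<Rightarrow> 'x \<Rightarrow> real) \<Rightarrow>
    real \<Rightarrow> real \<Rightarrow> 'x \<Rightarrow> real \<Rightarrow> real \<Rightarrow> real \<Rightarrow> real \<Rightarrow> bool" where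
  "spec_bounds psi psib b B sp M m lo hi \<longleftrightarrow>
     (\<forall>s s'. 0 \<le> psi b s s' \<and> psi b s s' \<le> M) \<and> (\<forall>s. m \<le> psi b sp s) \<and>
     (\<forall>s. lo \<le> psib B s \<and> psib B s \<le> hi) \<and>
     0 < m \<and> m \<le> 1 \<and> 1 \<le> M \<and> 0 < lo \<and> lo \<le> 1 \<and> 1 \<le> hi"

lemma H1_spec_bounds:
  fixes psi :: "real \<Rightarrow> 'x::finite \<Rightarrow> 'x \<Rightarrow> real"
  assumes H: "H1 psi psib" and K: "compact K"
  shows "\<exists>sp M m lo hi. \<forall>(b, B)\<in>K. spec_bounds psi psib b B sp M m lo hi"
proof -
  have K1: "compact (fst ` K)"
    by (rule compact_continuous_image[OF continuous_on_fst[OF continuous_on_id] K])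
  have K2: "compact (snd ` K)"
    by (rule compact_continuous_image[OF continuous_on_snd[OF continuous_on_id] K])
  obtain sp where "\<forall>b. 0 < Min (range (\<lambda>s. psi b s sp))" using H unfolding H1_def by blast
  then have "0 < psi b s sp" for b s by (simp add: Min_gr_iff)
  then have psi_sp: "0 < psi b sp s" for b s using H unfolding H1_def by metis
  have psi_cont: "\<And>p. continuous_on (fst ` K) (\<lambda>b. psi b (fst p) (snd p))"
    and psi_sp_cont: "\<And>s. continuous_on (fst ` K) (\<lambda>b. psi b sp s)"
    and psib_cont: "\<And>s. continuous_on (snd ` K) (\<lambda>B. psib B s)"
    using H1_continuous[OF H] by blast+
  obtain M where M: "M \<ge> 1" "\<forall>p::'x \<times> 'x. \<forall>b\<in>fst ` K. psi b (fst p) (snd p) \<le> M"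
    using compact_family_upper_bound[of "fst ` K" "\<lambda>p b. psi b (fst p) (snd p)", OF K1 psi_cont] by blast
  obtain m where m: "0 < m" "m \<le> 1" "\<forall>s. \<forall>b\<in>fst ` K. m \<le> psi b sp s"
    using compact_family_positive_lower_bound[of "fst ` K" "\<lambda>s b. psi b sp s", OF K1 psi_sp_cont psi_sp] by blast
  have psib_pos: "0 < psib B s" for B s using H unfolding H1_def by blast
  obtain lo where lo: "0 < lo" "lo \<le> 1" "\<forall>s. \<forall>B\<in>snd ` K. lo \<le> psib B s"
    using compact_family_positive_lower_bound[of "snd ` K" "\<lambda>s B. psib B s", OF K2 psib_cont psib_pos] by blast
  obtain hi where hi: "hi \<ge> 1" "\<forall>s. \<forall>B\<in>snd ` K. psib B s \<le> hi"
    using compact_family_upper_bound[of "snd ` K" "\<lambda>s B. psib B s", OF K2 psib_cont] by blast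
  have "\<forall>b s s'. 0 \<le> psi b s s'" using H unfolding H1_def by blast
  moreover have "b \<in> fst ` K" "B \<in> snd ` K" if "(b, B) \<in> K" for b B
    using that by force+
  ultimately have "\<forall>(b, B)\<in>K. spec_bounds psi psib b B sp M m lo hi"
    unfolding spec_bounds_def using M m lo hi by fastforce
  then show ?thesis by blast
qed

lemma H1_uniform_positivity:
  fixes psi :: "real \<Rightarrow> 'x::finite \<Rightarrow> 'x \<Rightarrow> real"
  assumes H: "H1 psi psib" and K: "compact K" and pos: "\<forall>b s s'. 0 < psi b s s'"
  shows "\<exists>mm>0. mm \<le> 1 \<and> (\<forall>(b, B)\<in>K. \<forall>s s'. mm \<le> psi b s s')"
proof -
  have K1: "compact (fst ` K)"
    by (rule compact_continuous_image[OF continuous_on_fst[OF continuous_on_id] K])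
  have psi_cont: "\<And>p. continuous_on (fst ` K) (\<lambda>b. psi b (fst p) (snd p))"
    using H1_continuous(1)[OF H] by blast
  obtain mm where "0 < mm" "mm \<le> 1" "\<forall>p::'x \<times> 'x. \<forall>b\<in>fst ` K. mm \<le> psi b (fst p) (snd p)"
    using compact_family_positive_lower_bound[of "fst ` K" "\<lambda>p b. psi b (fst p) (snd p)", OF K1 psi_cont] pos by blast
  moreover have "b \<in> fst ` K" if "(b, B) \<in> K" for b B using that by force
  ultimately show ?thesis by fastforce
qed

lemma message_prob_vector: "is_message h \<Longrightarrow> prob_vector (h G x y)"
  unfolding is_message_def prob_vector_def by blast

definition msg_factor :: "(real \<Rightarrow> 'x::finite \<Rightarrow> 'x \<Rightarrow> real) \<Rightarrow> real \<Rightarrow>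
    (graph \<Rightarrow> nat \<Rightarrow> nat \<Rightarrow> 'x \<Rightarrow> real) \<Rightarrow> graph \<Rightarrow> nat \<Rightarrow> nat \<Rightarrow> 'x \<Rightarrow> real" where
  "msg_factor psi b h G j r s = (\<Sum>sj\<in>UNIV. psi b s sj * h G j r sj)"

definition vertex_partition :: "(real \<Rightarrow> 'x::finite \<Rightarrow> 'x \<Rightarrow> real) \<Rightarrow> (real \<Rightarrow> 'x \<Rightarrow> real) \<Rightarrow>
    real \<Rightarrow> real \<Rightarrow> (graph \<Rightarrow> nat \<Rightarrow> nat \<Rightarrow> 'x \<Rightarrow> real) \<Rightarrow> graph \<Rightarrow> nat \<Rightarrow> nat set \<Rightarrow> real" where
  "vertex_partition psi psib b B h G r N =
     (\<Sum>s\<in>UNIV. psib B s * (\<Prod>v\<in>N. msg_factor psi b h G v r s))"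

definition edge_partition :: "(real \<Rightarrow> 'x::finite \<Rightarrow> 'x \<Rightarrow> real) \<Rightarrow> real \<Rightarrow>
    (graph \<Rightarrow> nat \<Rightarrow> nat \<Rightarrow> 'x \<Rightarrow> real) \<Rightarrow> graph \<Rightarrow> nat \<Rightarrow> nat \<Rightarrow> real" where
  "edge_partition psi b h G r j = (\<Sum>s\<in>UNIV. \<Sum>sj\<in>UNIV. psi b s sj * h G j r sj * h G r j s)"

lemma Phi_decomposition:
  "Phi psi psib b B h G r = ln (vertex_partition psi psib b B h G r (nbrs G r))
     - 1/2 * (\<Sum>j\<in>nbrs G r. ln (edge_partition psi b h G r j))"
  unfolding Phi_def vertex_partition_def edge_partition_def msg_factor_def ..

lemma edge_partition_as_average:
  "edge_partition psi b h G r j = (\<Sum>s\<in>UNIV. msg_factor psi b h G j r s * h G r j s)"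
  unfolding edge_partition_def msg_factor_def by (simp add: sum_distrib_right)

lemma spec_bounds_log_spread_nonneg:
  fixes psi :: "real \<Rightarrow> 'x::finite \<Rightarrow> 'x \<Rightarrow> real"
  shows "spec_bounds psi psib b B sp M m lo hi \<Longrightarrow> 0 \<le> log_spread TYPE('x) M m lo hi"
  unfolding spec_bounds_def by (intro log_spread_nonneg) auto

lemma msg_factor_bounds:
  assumes "prob_vector (h G j r)" "spec_bounds psi psib b B sp M m lo hi"
  shows "0 \<le> msg_factor psi b h G j r s" "msg_factor psi b h G j r s \<le> M"
    "m \<le> msg_factor psi b h G j r sp"
  using weighted_average_bounds[OF assms(1)] assms(2)
  unfolding msg_factor_def spec_bounds_def by auto

lemma vertex_partition_log_bound:
  fixes psi :: "real \<Rightarrow> 'x::finite \<Rightarrow> 'x \<Rightarrow> real"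
  assumes msg: "\<forall>v. prob_vector (h G v r)" and N: "finite N" "card N \<le> D"
    and sb: "spec_bounds psi psib b B sp M m lo hi"
  shows "\<bar>ln (vertex_partition psi psib b B h G r N)\<bar> \<le> log_spread TYPE('x) M m lo hi * (real D + 1)"
    and "0 < vertex_partition psi psib b B h G r N"
proof -
  have c: "0 < m" "m \<le> 1" "1 \<le> M" "0 < lo" "lo \<le> 1" "1 \<le> hi"
    and w: "\<forall>s. lo \<le> psib B s \<and> psib B s \<le> hi" using sb unfolding spec_bounds_def by auto
  have a: "\<forall>v\<in>N. \<forall>s. 0 \<le> msg_factor psi b h G v r s \<and> msg_factor psi b h G v r s \<le> M"
    "\<forall>v\<in>N. m \<le> msg_factor psi b h G v r sp"
    using msg_factor_bounds[OF _ sb] msg by auto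
  show "\<bar>ln (vertex_partition psi psib b B h G r N)\<bar> \<le> log_spread TYPE('x) M m lo hi * (real D + 1)"
    unfolding vertex_partition_def
    by (rule partition_log_bound[where a="\<lambda>v s. msg_factor psi b h G v r s", OF N a w c])
  have "0 < lo * m ^ D" using c by simp
  then show "0 < vertex_partition psi psib b B h G r N"
    unfolding vertex_partition_def
    using partition_bounds(1)[where a="\<lambda>v s. msg_factor psi b h G v r s", OF N a w c(1-4)] by linarith
qed

lemma edge_partition_bp:
  assumes bp: "bp_at psi psib b B h G r j" and j: "j \<in> nbrs G r" and fin: "finite (nbrs G r)"
    and msg: "prob_vector (h G r j)" and W: "0 < vertex_partition psi psib b B h G r (nbrs G r - {j})"
  shows "edge_partition psi b h G r j =
     vertex_partition psi psib b B h G r (nbrs G r) / vertex_partition psi psib b B h G r (nbrs G r - {j})"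
proof -
  define a where "a v s = msg_factor psi b h G v r s" for v s
  obtain c where c: "c > 0" "\<forall>s. h G r j s = c * psib B s * (\<Prod>v\<in>nbrs G r - {j}. a v s)"
    using bp unfolding bp_at_def a_def msg_factor_def by blast
  have "1 = (\<Sum>s\<in>UNIV. h G r j s)" using msg unfolding prob_vector_def by simp
  also have "\<dots> = c * vertex_partition psi psib b B h G r (nbrs G r - {j})"
    unfolding vertex_partition_def using c by (simp add: a_def sum_distrib_left mult.assoc)
  finally have normalisation: "c * vertex_partition psi psib b B h G r (nbrs G r - {j}) = 1" by simp
  have "edge_partition psi b h G r j = (\<Sum>s\<in>UNIV. c * (psib B s * (a j s * (\<Prod>v\<in>nbrs G r - {j}. a v s))))"
    unfolding edge_partition_as_average a_def[symmetric] using c by (simp add: algebra_simps)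
  also have "\<dots> = c * vertex_partition psi psib b B h G r (nbrs G r)"
    unfolding vertex_partition_def a_def[symmetric] using prod.remove[OF fin j, of "\<lambda>v. a v _"]
    by (simp add: sum_distrib_left)
  finally show ?thesis using normalisation W by (simp add: field_simps)
qed

lemma abs_Phi_le:
  assumes "\<bar>ln (vertex_partition psi psib b B h G r (nbrs G r))\<bar> \<le> A"
    and "\<And>j. j \<in> nbrs G r \<Longrightarrow> \<bar>ln (edge_partition psi b h G r j)\<bar> \<le> E"
  shows "\<bar>Phi psi psib b B h G r\<bar> \<le> A + 1/2 * (real (deg G r) * E)"
proof -
  have "\<bar>\<Sum>j\<in>nbrs G r. ln (edge_partition psi b h G r j)\<bar> \<le> (\<Sum>j\<in>nbrs G r. E)"
    using assms(2) by (intro order_trans[OF sum_abs sum_mono]) auto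
  also have "\<dots> = real (deg G r) * E" unfolding deg_def by simp
  finally show ?thesis unfolding Phi_decomposition using assms(1) by linarith
qed

text \<open>Part (a) at a single rooted tree: if all outgoing messages at the root satisfy BP, every edge
term is O(D), hence Phi = O(D^2).\<close>
lemma Phi_bound_bp:
  fixes psi :: "real \<Rightarrow> 'x::finite \<Rightarrow> 'x \<Rightarrow> real"
  assumes msg: "\<forall>x y. prob_vector (h G x y)" and fin: "finite (nbrs G r)"
    and bp: "\<forall>j\<in>nbrs G r. bp_at psi psib b B h G r j"
    and sb: "spec_bounds psi psib b B sp M m lo hi"
  shows "\<bar>Phi psi psib b B h G r\<bar> \<le> 2 * log_spread TYPE('x) M m lo hi * (real (deg G r)^2 + 1)"
proof -
  define D where "D = deg G r"
  define L where "L = log_spread TYPE('x) M m lo hi"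
  have L: "\<bar>ln (vertex_partition psi psib b B h G r N)\<bar> \<le> L * (real D + 1)"
    "0 < vertex_partition psi psib b B h G r N" if "N \<subseteq> nbrs G r" for N
  proof -
    have "finite N" "card N \<le> D" using that fin card_mono unfolding D_def deg_def by (auto intro: finite_subset)
    then show "\<bar>ln (vertex_partition psi psib b B h G r N)\<bar> \<le> L * (real D + 1)"
      "0 < vertex_partition psi psib b B h G r N"
      unfolding L_def using vertex_partition_log_bound[OF _ _ _ sb] msg by auto
  qed
  have L0: "0 \<le> L" unfolding L_def by (rule spec_bounds_log_spread_nonneg[OF sb])
  have edge: "\<bar>ln (edge_partition psi b h G r j)\<bar> \<le> 2 * (L * (real D + 1))" if j: "j \<in> nbrs G r" for j
  proof -
    have "ln (edge_partition psi b h G r j) = ln (vertex_partition psi psib b B h G r (nbrs G r))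
        - ln (vertex_partition psi psib b B h G r (nbrs G r - {j}))"
      using edge_partition_bp[OF bp[rule_format, OF j] j fin msg[rule_format] L(2)]
        L(2)[of "nbrs G r"] L(2)[of "nbrs G r - {j}"] by (simp add: ln_div)
    then show ?thesis using L(1)[of "nbrs G r"] L(1)[of "nbrs G r - {j}"] by auto
  qed
  have "\<bar>Phi psi psib b B h G r\<bar> \<le> L * (real D + 1) + 1/2 * (real D * (2 * (L * (real D + 1))))"
    using abs_Phi_le[OF L(1) edge] unfolding D_def by blast
  also have "\<dots> = L * (real D + 1)^2" by (simp add: algebra_simps power2_eq_square)
  also have "\<dots> \<le> L * (2 * (real D ^ 2 + 1))"
  proof (rule mult_left_mono)
    have "0 \<le> (real D - 1)^2" by simp
    then show "(real D + 1)^2 \<le> 2 * (real D ^ 2 + 1)" by (simp add: power2_eq_square algebra_simps)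
    show "0 \<le> L" by (rule L0)
  qed
  finally show ?thesis unfolding L_def D_def by (simp add: algebra_simps)
qed

text \<open>Part (b) at a single rooted tree: for strictly positive interactions every edge term is
bounded by a constant, so Phi = O(D) for arbitrary messages.\<close>
lemma Phi_bound_positive:
  fixes psi :: "real \<Rightarrow> 'x::finite \<Rightarrow> 'x \<Rightarrow> real"
  assumes msg: "\<forall>x y. prob_vector (h G x y)" and fin: "finite (nbrs G r)"
    and sb: "spec_bounds psi psib b B sp M m lo hi"
    and pos: "\<forall>s s'. mm \<le> psi b s s'" "0 < mm" "mm \<le> 1"
  shows "\<bar>Phi psi psib b B h G r\<bar> \<le> (log_spread TYPE('x) M m lo hi + (ln M - ln mm)) * (real (deg G r) + 1)"
proof -
  define D where "D = deg G r"
  define L where "L = log_spread TYPE('x) M m lo hi"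
  have Z: "\<bar>ln (vertex_partition psi psib b B h G r (nbrs G r))\<bar> \<le> L * (real D + 1)"
    using vertex_partition_log_bound(1)[OF _ fin _ sb] msg unfolding L_def D_def deg_def by auto
  have M: "1 \<le> M" using sb unfolding spec_bounds_def by auto
  have edge: "\<bar>ln (edge_partition psi b h G r j)\<bar> \<le> ln M - ln mm" for j
  proof (rule abs_ln_le_log_ratio)
    have sb_everywhere: "spec_bounds psi psib b B s M mm lo hi" for s
      using sb pos unfolding spec_bounds_def by auto
    have "mm \<le> msg_factor psi b h G j r s" "msg_factor psi b h G j r s \<le> M" for s
      using msg_factor_bounds[of h G j r, OF _ sb_everywhere] msg by auto
    then show "mm \<le> edge_partition psi b h G r j" "edge_partition psi b h G r j \<le> M"
      unfolding edge_partition_as_average using weighted_average_bounds[OF msg[rule_format]] by auto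
  qed (use pos M in auto)
  have "0 \<le> ln M - ln mm" using pos M by simp
  then have "0 \<le> real D * (ln M - ln mm)" "0 \<le> ln M - ln mm" by simp_all
  then have "L * (real D + 1) + 1/2 * (real D * (ln M - ln mm)) \<le> (L + (ln M - ln mm)) * (real D + 1)"
    by (simp add: algebra_simps)
  then show ?thesis using abs_Phi_le[OF Z edge] unfolding L_def D_def by linarith
qed

section \<open>Measurability\<close>

lemma measurable_edge[measurable]: "Measurable.pred graph_meas (\<lambda>G::graph. G x y)"
proof -
  have row: "(\<lambda>G::graph. G x) \<in> measurable graph_meas (Pi\<^sub>M UNIV (\<lambda>_::nat. count_space (UNIV::bool set)))"
    unfolding graph_meas_def by (rule measurable_component_singleton) simp
  have entry: "(\<lambda>g::nat \<Rightarrow> bool. g y) \<in> measurable (Pi\<^sub>M UNIV (\<lambda>_::nat. count_space UNIV)) (count_space UNIV)"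
    by (rule measurable_component_singleton) simp
  show ?thesis using measurable_compose[OF row entry] by simp
qed

lemma measurable_message:
  assumes "is_message h"
  shows "(\<lambda>G. h G x y s) \<in> borel_measurable graph_meas"
proof -
  have root: "(\<lambda>G. (G, x, y)) \<in> measurable graph_meas drgraph_space"
    unfolding drgraph_space_def by measurable
  have "(\<lambda>z. h (fst z) (fst (snd z)) (snd (snd z)) s) \<in> borel_measurable drgraph_space"
    using assms unfolding is_message_def by blast
  from measurable_compose[OF root this] show ?thesis by simp
qed

lemma measurable_rooted:
  assumes "\<And>r. (\<lambda>G. F G r) \<in> measurable graph_meas N"
  shows "(\<lambda>z. F (fst z) (snd z)) \<in> measurable rgraph_space N"
proof (rule measurable_compose_countable)
  show "(\<lambda>z. F (fst z) r) \<in> measurable rgraph_space N" for r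
    unfolding rgraph_space_def by (rule measurable_compose[OF measurable_fst assms])
qed (simp add: rgraph_space_def)

lemma measurable_doubly_rooted:
  assumes "\<And>x y. (\<lambda>G. F G x y) \<in> measurable graph_meas N"
  shows "(\<lambda>z. F (fst z) (fst (snd z)) (snd (snd z))) \<in> measurable drgraph_space N"
proof (rule measurable_compose_countable[where f="\<lambda>p z. F (fst z) (fst p) (snd p)" and g=snd])
  show "(\<lambda>z. F (fst z) (fst p) (snd p)) \<in> measurable drgraph_space N" for p :: "nat \<times> nat"
    unfolding drgraph_space_def by (rule measurable_compose[OF measurable_fst assms])
  have "count_space (UNIV::nat set) \<Otimes>\<^sub>M count_space (UNIV::nat set) = count_space UNIV"
    using pair_measure_countable[of "UNIV::nat set" "UNIV::nat set"] by simp
  then show "snd \<in> measurable drgraph_space (count_space UNIV)"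
    unfolding drgraph_space_def by (metis measurable_snd)
qed

text \<open>The neighbourhood of the root enters Phi and the BP equation through sums and products
over a random finite vertex set; these are pointwise limits of truncated sums and products.\<close>
lemma pred_finite_random_set:
  fixes S :: "'a \<Rightarrow> nat set"
  assumes [measurable]: "\<And>v. Measurable.pred M (\<lambda>x. v \<in> S x)"
  shows "Measurable.pred M (\<lambda>x. finite (S x))"
proof -
  have "Measurable.pred M (\<lambda>x. \<exists>n. \<forall>v. v \<in> S x \<longrightarrow> v < n)" by measurable
  moreover have "finite (S x) \<longleftrightarrow> (\<exists>n. \<forall>v. v \<in> S x \<longrightarrow> v < n)" for x
    by (auto simp: finite_nat_set_iff_bounded)
  ultimately show ?thesis by simp
qed

lemma borel_measurable_sum_random_set[measurable (raw)]:
  fixes S :: "'a \<Rightarrow> nat set" and g :: "nat \<Rightarrow> 'a \<Rightarrow> real"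
  assumes S: "\<And>v. Measurable.pred M (\<lambda>x. v \<in> S x)" and g: "\<And>v. g v \<in> borel_measurable M"
  shows "(\<lambda>x. \<Sum>v\<in>S x. g v x) \<in> borel_measurable M"
proof (rule borel_measurable_LIMSEQ_real)
  note [measurable] = S g pred_finite_random_set[OF S]
  show "(\<lambda>x. if finite (S x) then \<Sum>v<n. if v \<in> S x then g v x else 0 else 0) \<in> borel_measurable M" for n
    by measurable
  show "(\<lambda>n. if finite (S x) then \<Sum>v<n. if v \<in> S x then g v x else 0 else 0) \<longlonglongrightarrow> (\<Sum>v\<in>S x. g v x)" for x
  proof (cases "finite (S x)")
    case True
    then obtain n0 where n0: "S x \<subseteq> {..<n0}" by (auto simp: finite_nat_set_iff_bounded)
    have stable: "(if finite (S x) then \<Sum>v<n. if v \<in> S x then g v x else 0 else 0) = (\<Sum>v\<in>S x. g v x)"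
      if "n \<ge> n0" for n
    proof -
      have "{..<n} \<inter> S x = S x" using n0 that by auto
      then show ?thesis using True sum.inter_restrict[of "{..<n}" "\<lambda>v. g v x" "S x"] by simp
    qed
    show ?thesis using stable by (intro tendsto_eventually eventually_sequentiallyI) blast
  qed simp
qed

lemma borel_measurable_prod_random_set[measurable (raw)]:
  fixes S :: "'a \<Rightarrow> nat set" and g :: "nat \<Rightarrow> 'a \<Rightarrow> real"
  assumes S: "\<And>v. Measurable.pred M (\<lambda>x. v \<in> S x)" and g: "\<And>v. g v \<in> borel_measurable M"
  shows "(\<lambda>x. \<Prod>v\<in>S x. g v x) \<in> borel_measurable M"
proof (rule borel_measurable_LIMSEQ_real)
  note [measurable] = S g pred_finite_random_set[OF S]
  show "(\<lambda>x. if finite (S x) then \<Prod>v<n. if v \<in> S x then g v x else 1 else 1) \<in> borel_measurable M" for n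
    by measurable
  show "(\<lambda>n. if finite (S x) then \<Prod>v<n. if v \<in> S x then g v x else 1 else 1) \<longlonglongrightarrow> (\<Prod>v\<in>S x. g v x)" for x
  proof (cases "finite (S x)")
    case True
    then obtain n0 where n0: "S x \<subseteq> {..<n0}" by (auto simp: finite_nat_set_iff_bounded)
    have stable: "(if finite (S x) then \<Prod>v<n. if v \<in> S x then g v x else 1 else 1) = (\<Prod>v\<in>S x. g v x)"
      if "n \<ge> n0" for n
    proof -
      have "{..<n} \<inter> S x = S x" using n0 that by auto
      then show ?thesis using True prod.inter_restrict[of "{..<n}" "\<lambda>v. g v x" "S x"] by simp
    qed
    show ?thesis using stable by (intro tendsto_eventually eventually_sequentiallyI) blast
  qed simp
qed

lemma measurable_Phi:
  assumes "is_message h"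
  shows "(\<lambda>z. Phi psi psib b B h (fst z) (snd z)) \<in> borel_measurable rgraph_space"
proof (rule measurable_rooted)
  note [measurable] = measurable_message[OF assms]
  show "(\<lambda>G. Phi psi psib b B h G r) \<in> borel_measurable graph_meas" for r
    unfolding Phi_def nbrs_def by measurable
qed

lemma comp_refl: "r \<in> comp G r"
  unfolding comp_def by simp

lemma comp_step: "u \<in> comp G r \<Longrightarrow> G u v \<Longrightarrow> v \<in> comp G r"
  unfolding comp_def by (auto intro: rtrancl_into_rtrancl)

lemma comp_trans: "u \<in> comp G r \<Longrightarrow> v \<in> comp G u \<Longrightarrow> v \<in> comp G r"
  unfolding comp_def by (auto intro: rtrancl_trans)

lemma comp_edge: "G r v \<Longrightarrow> v \<in> comp G r"
  using comp_step[OF comp_refl] .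

lemma comp_eq: "u \<in> comp G r \<Longrightarrow> r \<in> comp G u \<Longrightarrow> comp G u = comp G r"
  using comp_trans by blast

definition root_iso :: "(nat \<Rightarrow> nat) \<Rightarrow> graph \<Rightarrow> nat \<Rightarrow> graph \<Rightarrow> nat \<Rightarrow> bool" where
  "root_iso f G a G' a' \<longleftrightarrow> bij_betw f (comp G a) (comp G' a') \<and>
     (\<forall>u\<in>comp G a. \<forall>v\<in>comp G a. G u v \<longleftrightarrow> G' (f u) (f v)) \<and> f a = a'"

lemma driso_root_iso:
  "driso G a b G' a' b' \<longleftrightarrow> b \<in> comp G a \<and> b' \<in> comp G' a' \<and> (\<exists>f. root_iso f G a G' a' \<and> f b = b')"
  unfolding driso_def root_iso_def by blast

lemma root_iso_path:
  assumes iso: "root_iso f G a G' a'" and u: "u \<in> comp G a" and v: "v \<in> comp G u"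
  shows "f v \<in> comp G' (f u)"
proof -
  have "(u, v) \<in> {(x, y). G x y}\<^sup>*" using v unfolding comp_def by simp
  then show ?thesis
  proof (induction rule: rtrancl_induct)
    case base
    then show ?case by (rule comp_refl)
  next
    case (step v w)
    have "v \<in> comp G a" "w \<in> comp G a"
      using step comp_trans[OF u] comp_step unfolding comp_def by blast+
    then have "G' (f v) (f w)" using iso step(2) unfolding root_iso_def by blast
    then show ?case using comp_step[OF step(3)] by blast
  qed
qed

lemma root_iso_reroot:
  assumes iso: "root_iso f G a G' a'" and u: "u \<in> comp G a" and root_reachable: "a \<in> comp G u"
  shows "root_iso f G u G' (f u)"
proof -
  have same: "comp G u = comp G a" by (rule comp_eq[OF u root_reachable])
  have "f u \<in> comp G' a'" using iso u unfolding root_iso_def bij_betw_def by blast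
  moreover have "a' \<in> comp G' (f u)" using root_iso_path[OF iso u root_reachable] iso unfolding root_iso_def by simp
  ultimately have "comp G' (f u) = comp G' a'" by (rule comp_eq)
  then show ?thesis using iso unfolding root_iso_def same by simp
qed

lemma root_iso_nbrs:
  assumes iso: "root_iso f G a G' a'" and u: "u \<in> comp G a"
  shows "f ` nbrs G u = nbrs G' (f u)"
proof
  show "f ` nbrs G u \<subseteq> nbrs G' (f u)"
    using iso u comp_step[OF u] unfolding root_iso_def nbrs_def by auto
  show "nbrs G' (f u) \<subseteq> f ` nbrs G u"
  proof
    fix v' assume v': "v' \<in> nbrs G' (f u)"
    have "f u \<in> comp G' a'" using iso u unfolding root_iso_def bij_betw_def by blast
    then have "v' \<in> f ` comp G a" using comp_step v' iso unfolding root_iso_def bij_betw_def nbrs_def by blast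
    then obtain v where "v \<in> comp G a" "v' = f v" by blast
    then show "v' \<in> f ` nbrs G u" using iso u v' unfolding root_iso_def nbrs_def by auto
  qed
qed

lemma driso_of_root_iso:
  assumes "root_iso f G u G' u'" "v \<in> comp G u"
  shows "driso G u v G' u' (f v)"
  using assms unfolding driso_root_iso root_iso_def bij_betw_def by (blast intro: comp_refl)

lemma root_iso_message:
  assumes inv: "invariant2 h" and iso: "root_iso f G b G' b'"
    and v: "G b v" "G v b"
  shows "h G v b = h G' (f v) b'"
proof -
  have vC: "v \<in> comp G b" using comp_edge[of G, OF v(1)] .
  have "root_iso f G v G' (f v)"
    by (rule root_iso_reroot[OF iso vC comp_edge[of G, OF v(2)]])
  moreover have "f b = b'" using iso unfolding root_iso_def by simp
  ultimately have "driso G v b G' (f v) b'"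
    using driso_of_root_iso comp_edge[of G, OF v(2)] by metis
  then show ?thesis using inv unfolding invariant2_def by blast
qed

text \<open>The message y->x fails the BP equation, although y has symmetric edges and is adjacent to x.
This is the event that the mass transport argument shows to be null.\<close>
definition bp_defect :: "(real \<Rightarrow> 'x::finite \<Rightarrow> 'x \<Rightarrow> real) \<Rightarrow> (real \<Rightarrow> 'x \<Rightarrow> real) \<Rightarrow> real \<Rightarrow> real \<Rightarrow>
    (graph \<Rightarrow> nat \<Rightarrow> nat \<Rightarrow> 'x \<Rightarrow> real) \<Rightarrow> graph \<Rightarrow> nat \<Rightarrow> nat \<Rightarrow> bool" where
  "bp_defect psi psib b B h G x y \<longleftrightarrow>
     G x y \<and> G y x \<and> (\<forall>v. G y v \<longrightarrow> G v y) \<and> \<not> bp_at psi psib b B h G y x"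

text \<open>The BP defect is invariant under isomorphisms of doubly rooted graphs, as required by the
mass transport principle.\<close>
lemma bp_defect_invariant:
  assumes inv: "invariant2 h" and d: "driso G a b G' a' b'"
  shows "bp_defect psi psib \<beta> BB h G a b = bp_defect psi psib \<beta> BB h G' a' b'"
proof -
  obtain f where iso: "root_iso f G a G' a'" and bC: "b \<in> comp G a" and fb: "f b = b'"
    using d unfolding driso_root_iso by blast
  have aC: "a \<in> comp G a" by (rule comp_refl)
  have pres: "\<And>u v. u \<in> comp G a \<Longrightarrow> v \<in> comp G a \<Longrightarrow> G u v \<longleftrightarrow> G' (f u) (f v)"
    and fa: "f a = a'" and inj: "inj_on f (comp G a)"
    using iso unfolding root_iso_def bij_betw_def by auto
  have nbC: "nbrs G b \<subseteq> comp G a" using comp_step[OF bC] unfolding nbrs_def by blast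
  have nbrs_b: "f ` nbrs G b = nbrs G' b'" using root_iso_nbrs[OF iso bC] fb by simp
  have edges: "G a b \<longleftrightarrow> G' a' b'" "G b a \<longleftrightarrow> G' b' a'"
    using pres[OF aC bC] pres[OF bC aC] fa fb by auto
  have symmetric_at_b: "(\<forall>v. G b v \<longrightarrow> G v b) \<longleftrightarrow> (\<forall>v'. G' b' v' \<longrightarrow> G' v' b')"
  proof -
    have edge_b: "G v b \<longleftrightarrow> G' (f v) b'" if "v \<in> nbrs G b" for v
      using pres[OF _ bC] nbC that fb by auto
    have "(\<forall>v. G b v \<longrightarrow> G v b) \<longleftrightarrow> (\<forall>v\<in>nbrs G b. G v b)" by (simp add: nbrs_def)
    also have "\<dots> \<longleftrightarrow> (\<forall>v\<in>nbrs G b. G' (f v) b')" using edge_b by simp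
    also have "\<dots> \<longleftrightarrow> (\<forall>v'\<in>nbrs G' b'. G' v' b')" unfolding nbrs_b[symmetric] by simp
    finally show ?thesis by (simp add: nbrs_def)
  qed
  have bp: "bp_at psi psib \<beta> BB h G b a \<longleftrightarrow> bp_at psi psib \<beta> BB h G' b' a'"
    if ba: "G b a" and sym: "\<forall>v. G b v \<longrightarrow> G v b"
  proof -
    have iso_b: "root_iso f G b G' b'"
      using root_iso_reroot[OF iso bC comp_edge[of G, OF ba]] fb by simp
    have out: "h G b a = h G' b' a'"
      using driso_of_root_iso[OF iso_b comp_edge[of G, OF ba]] inv fa
      unfolding invariant2_def by metis
    have inc: "h G v b = h G' (f v) b'" if "v \<in> nbrs G b" for v
      using root_iso_message[OF inv iso_b] that sym unfolding nbrs_def by blast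
    have img: "f ` (nbrs G b - {a}) = nbrs G' b' - {a'}"
      using inj_on_image_set_diff[OF inj _, of "nbrs G b" "{a}"] nbC aC nbrs_b fa by auto
    have inj_N: "inj_on f (nbrs G b - {a})" using inj_on_subset[OF inj] nbC by blast
    have "(\<Prod>v\<in>nbrs G' b' - {a'}. \<Sum>sv\<in>UNIV. psi \<beta> s sv * h G' v b' sv) =
          (\<Prod>v\<in>nbrs G b - {a}. \<Sum>sv\<in>UNIV. psi \<beta> s sv * h G v b sv)" for s
      unfolding img[symmetric] prod.reindex[OF inj_N] using inc by (intro prod.cong) auto
    then show ?thesis unfolding bp_at_def out by simp
  qed
  show ?thesis
  proof (cases "G b a \<and> (\<forall>v. G b v \<longrightarrow> G v b)")
    case True
    then show ?thesis unfolding bp_defect_def using edges symmetric_at_b bp by simp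
  next
    case False
    then show ?thesis unfolding bp_defect_def using edges symmetric_at_b by blast
  qed
qed

section \<open>Mass transport: BP for outgoing messages\<close>

text \<open>The BP equation in explicitly normalised form, which avoids the existential normalising
constant and makes the BP defect measurable.\<close>
lemma bp_at_normalised:
  assumes "(\<Sum>s\<in>UNIV. h G x y s) = 1"
  shows "bp_at psi psib b B h G x y \<longleftrightarrow>
    (0 < (\<Sum>s\<in>UNIV. psib B s * (\<Prod>v\<in>nbrs G x - {y}. \<Sum>sv\<in>UNIV. psi b s sv * h G v x sv)) \<and>
     (\<forall>s. h G x y s = psib B s * (\<Prod>v\<in>nbrs G x - {y}. \<Sum>sv\<in>UNIV. psi b s sv * h G v x sv) /
         (\<Sum>s\<in>UNIV. psib B s * (\<Prod>v\<in>nbrs G x - {y}. \<Sum>sv\<in>UNIV. psi b s sv * h G v x sv))))"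
  (is "?bp \<longleftrightarrow> (0 < sum ?w UNIV \<and> (\<forall>s. h G x y s = ?w s / sum ?w UNIV))")
proof
  assume ?bp
  then obtain c where c: "c > 0" "\<forall>s. h G x y s = c * ?w s" unfolding bp_at_def by (auto simp: mult.assoc)
  have "1 = c * sum ?w UNIV" using assms c by (simp add: sum_distrib_left)
  then have "sum ?w UNIV = 1 / c" using c by (simp add: field_simps)
  then show "0 < sum ?w UNIV \<and> (\<forall>s. h G x y s = ?w s / sum ?w UNIV)" using c by simp
next
  assume "0 < sum ?w UNIV \<and> (\<forall>s. h G x y s = ?w s / sum ?w UNIV)"
  then show ?bp unfolding bp_at_def by (intro exI[of _ "1 / sum ?w UNIV"]) (auto simp: field_simps)
qed

lemma measurable_bp_defect:
  assumes "is_message h"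
  shows "Measurable.pred graph_meas (\<lambda>G. bp_defect psi psib b B h G x y)"
proof -
  note [measurable] = measurable_message[OF assms]
  define w where "w s G = psib B s * (\<Prod>v\<in>nbrs G y - {x}. \<Sum>sv\<in>UNIV. psi b s sv * h G v y sv)" for s G
  have [measurable]: "w s \<in> borel_measurable graph_meas" for s
    unfolding w_def nbrs_def by measurable
  have [measurable]: "(\<lambda>G. \<Sum>s\<in>UNIV. w s G) \<in> borel_measurable graph_meas" by measurable
  have [measurable]: "Measurable.pred graph_meas (\<lambda>G. h G y x s = w s G / (\<Sum>s\<in>UNIV. w s G))" for s
    unfolding pred_def by (rule borel_measurable_eq) measurable
  have normalised: "(\<Sum>s\<in>UNIV. h G y x s) = 1" for G using assms unfolding is_message_def by blast
  have "bp_defect psi psib b B h G x y \<longleftrightarrow> G x y \<and> G y x \<and> (\<forall>v. G y v \<longrightarrow> G v y) \<and>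
      \<not> (0 < (\<Sum>s\<in>UNIV. w s G) \<and> (\<forall>s. h G y x s = w s G / (\<Sum>s\<in>UNIV. w s G)))" for G
    unfolding bp_defect_def bp_at_normalised[where h=h and x=y and y=x, OF normalised] w_def ..
  moreover have "Measurable.pred graph_meas (\<lambda>G. G x y \<and> G y x \<and> (\<forall>v. G y v \<longrightarrow> G v y) \<and>
      \<not> (0 < (\<Sum>s\<in>UNIV. w s G) \<and> (\<forall>s. h G y x s = w s G / (\<Sum>s\<in>UNIV. w s G))))"
    by measurable
  ultimately show ?thesis by simp
qed

lemma unimodular_null_transfer:
  assumes um: "unimodular \<mu>" and sets: "sets \<mu> = sets rgraph_space"
    and Q_meas: "\<And>x y. Measurable.pred graph_meas (\<lambda>G. Q G x y)"
    and Q_inv: "invariant2 Q" and Q_comp: "\<And>G x y. Q G x y \<Longrightarrow> x \<in> comp G y"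
    and out: "AE z in \<mu>. \<forall>x. \<not> Q (fst z) (snd z) x"
  shows "AE z in \<mu>. \<not> (\<exists>x. Q (fst z) x (snd z))"
proof -
  define f where "f z = (if Q (fst z) (fst (snd z)) (snd (snd z)) then 1 else 0 :: ennreal)" for z
  have "Measurable.pred drgraph_space (\<lambda>z. Q (fst z) (fst (snd z)) (snd (snd z)))"
    by (rule measurable_doubly_rooted[OF Q_meas])
  then have "f \<in> borel_measurable drgraph_space" unfolding f_def by measurable
  moreover have "invariant2 (\<lambda>G a b. f (G, a, b))"
    using Q_inv unfolding invariant2_def f_def by simp
  ultimately have transport:
    "(\<integral>\<^sup>+ z. (\<integral>\<^sup>+ x. f (fst z, snd z, x) \<partial>count_space (comp (fst z) (snd z))) \<partial>\<mu>) =
     (\<integral>\<^sup>+ z. (\<integral>\<^sup>+ x. f (fst z, x, snd z) \<partial>count_space (comp (fst z) (snd z))) \<partial>\<mu>)"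
    using um unfolding unimodular_def by blast
  have "AE z in \<mu>. (\<integral>\<^sup>+ x. f (fst z, snd z, x) \<partial>count_space (comp (fst z) (snd z))) = 0"
    using out by eventually_elim (simp add: f_def)
  then have "(\<integral>\<^sup>+ z. (\<integral>\<^sup>+ x. f (fst z, snd z, x) \<partial>count_space (comp (fst z) (snd z))) \<partial>\<mu>) = 0"
    by (simp add: nn_integral_cong_AE)
  define E where "E = {z \<in> space \<mu>. \<exists>x. Q (fst z) x (snd z)}"
  have "Measurable.pred rgraph_space (\<lambda>z. \<exists>x. Q (fst z) x (snd z))"
  proof (rule measurable_rooted)
    show "Measurable.pred graph_meas (\<lambda>G. \<exists>x. Q G x r)" for r
      using Q_meas by measurable
  qed
  then have E_sets: "E \<in> sets \<mu>"
    unfolding E_def pred_def sets_eq_imp_space_eq[OF sets] sets .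
  have "emeasure \<mu> E = (\<integral>\<^sup>+ z. indicator E z \<partial>\<mu>)" using E_sets by simp
  also have "\<dots> \<le> (\<integral>\<^sup>+ z. (\<integral>\<^sup>+ x. f (fst z, x, snd z) \<partial>count_space (comp (fst z) (snd z))) \<partial>\<mu>)"
  proof (rule nn_integral_mono)
    fix z
    show "indicator E z \<le> (\<integral>\<^sup>+ x. f (fst z, x, snd z) \<partial>count_space (comp (fst z) (snd z)))"
    proof (cases "z \<in> E")
      case True
      then obtain x where x: "Q (fst z) x (snd z)" unfolding E_def by blast
      have "1 = (\<integral>\<^sup>+ y. indicator {x} y \<partial>count_space (comp (fst z) (snd z)))"
        using Q_comp[OF x] by (subst nn_integral_indicator) auto
      also have "\<dots> \<le> (\<integral>\<^sup>+ y. f (fst z, y, snd z) \<partial>count_space (comp (fst z) (snd z)))"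
        by (rule nn_integral_mono) (use x in \<open>auto simp: f_def indicator_def\<close>)
      finally show ?thesis using True by simp
    qed simp
  qed
  finally have "E \<in> null_sets \<mu>" using E_sets transport \<open>_ = 0\<close> by (simp add: null_sets_def)
  then show ?thesis by (rule AE_not_in[THEN AE_mp]) (auto simp: E_def intro!: AE_I2)
qed

text \<open>By unimodularity, BP for the incoming messages j->o, which is what membership in Hstar
asserts, implies BP for the outgoing messages o->j almost surely.\<close>
lemma Hstar_outgoing_bp:
  assumes U: "unimod_prob_on_trees \<mu>" and h: "h \<in> Hstar \<mu> psi psib b B"
  shows "AE z in \<mu>. \<forall>j\<in>nbrs (fst z) (snd z). bp_at psi psib b B h (fst z) (snd z) j"
proof -
  have msg: "is_message h" and incoming: "AE_up \<mu> (bp_at psi psib b B h)"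
    using h unfolding Hstar_def by auto
  have sets: "sets \<mu> = sets rgraph_space" and trees: "AE z in \<mu>. is_lf_tree (fst z) (snd z)"
    and um: "unimodular \<mu>" using U unfolding unimod_prob_on_trees_def by auto
  have "AE z in \<mu>. \<forall>x. \<not> bp_defect psi psib b B h (fst z) (snd z) x"
    using incoming unfolding AE_up_def by eventually_elim (auto simp: bp_defect_def nbrs_def)
  moreover have "invariant2 h" using msg unfolding is_message_def by blast
  then have "invariant2 (bp_defect psi psib b B h)"
    using bp_defect_invariant unfolding invariant2_def by blast
  moreover have "x \<in> comp G y" if "bp_defect psi psib b B h G x y" for G x y
    using that comp_edge[of G y x] unfolding bp_defect_def by blast
  ultimately have no_defect: "AE z in \<mu>. \<not> (\<exists>x. bp_defect psi psib b B h (fst z) x (snd z))"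
    using unimodular_null_transfer[where Q="bp_defect psi psib b B h", OF um sets measurable_bp_defect[OF msg]]
    by blast
  show ?thesis using no_defect trees
  proof eventually_elim
    case (elim z)
    then have "\<forall>v. fst z (snd z) v \<longleftrightarrow> fst z v (snd z)"
      using comp_refl unfolding is_lf_tree_def by blast
    then show ?case using elim(1) unfolding bp_defect_def nbrs_def by blast
  qed
qed

lemma integrable_bound_by_moment:
  fixes f g :: "'a \<Rightarrow> real"
  assumes "prob_space \<mu>" and g: "integrable \<mu> g" and f: "f \<in> borel_measurable \<mu>"
    and bound: "AE z in \<mu>. \<bar>f z\<bar> \<le> c * (g z + 1)"
  shows "integrable \<mu> f \<and> \<bar>integral\<^sup>L \<mu> f\<bar> \<le> c * integral\<^sup>L \<mu> g + c"
proof -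
  interpret prob_space \<mu> by fact
  have k: "integrable \<mu> (\<lambda>z. c * (g z + 1))" using g by auto
  have f_int: "integrable \<mu> f"
    by (rule Bochner_Integration.integrable_bound[OF k f]) (use bound in \<open>auto elim: AE_mp\<close>)
  have "\<bar>integral\<^sup>L \<mu> f\<bar> \<le> integral\<^sup>L \<mu> (\<lambda>z. \<bar>f z\<bar>)" using integral_norm_bound[of \<mu> f] by simp
  also have "\<dots> \<le> integral\<^sup>L \<mu> (\<lambda>z. c * (g z + 1))"
    by (rule integral_mono_AE) (use f_int k bound in auto)
  also have "\<dots> = c * integral\<^sup>L \<mu> g + c" using g prob_space by (simp add: algebra_simps)
  finally show ?thesis using f_int by simp
qed

lemma le_larger_constant: "a \<le> c * y \<Longrightarrow> 0 \<le> y \<Longrightarrow> c \<le> C \<Longrightarrow> a \<le> C * (y::real)"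
  by (meson mult_right_mono order_trans)

lemma Phi_bound_Hstar_compact:
  fixes psi :: "real \<Rightarrow> 'x::finite \<Rightarrow> 'x \<Rightarrow> real"
  assumes H: "H1 psi psib" and U: "unimod_prob_on_trees \<mu>" and K: "compact K"
  shows "\<exists>C0. \<forall>C\<ge>C0. \<forall>(b, B)\<in>K. \<forall>h\<in>Hstar \<mu> psi psib b B.
     AE z in \<mu>. \<bar>Phi psi psib b B h (fst z) (snd z)\<bar> \<le> C * (real (deg (fst z) (snd z))^2 + 1)"
proof -
  obtain sp M m lo hi where sb: "\<forall>(b, B)\<in>K. spec_bounds psi psib b B sp M m lo hi"
    using H1_spec_bounds[OF H K] by blast
  have trees: "AE z in \<mu>. is_lf_tree (fst z) (snd z)"
    using U unfolding unimod_prob_on_trees_def by blast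
  show ?thesis
  proof (intro exI[of _ "2 * log_spread TYPE('x) M m lo hi"] allI impI ballI, clarify)
    fix C b B h
    assume C: "2 * log_spread TYPE('x) M m lo hi \<le> C" and bB: "(b, B) \<in> K"
      and h: "h \<in> Hstar \<mu> psi psib b B"
    show "AE z in \<mu>. \<bar>Phi psi psib b B h (fst z) (snd z)\<bar> \<le> C * (real (deg (fst z) (snd z))^2 + 1)"
      using Hstar_outgoing_bp[OF U h] trees
    proof eventually_elim
      case (elim z)
      have "finite (nbrs (fst z) (snd z))" using elim(2) comp_refl unfolding is_lf_tree_def by blast
      moreover have "\<forall>x y. prob_vector (h G x y)" for G
        using h message_prob_vector unfolding Hstar_def by blast
      moreover have "spec_bounds psi psib b B sp M m lo hi" using sb bB by auto
      ultimately have "\<bar>Phi psi psib b B h (fst z) (snd z)\<bar>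
          \<le> 2 * log_spread TYPE('x) M m lo hi * (real (deg (fst z) (snd z))^2 + 1)"
        using Phi_bound_bp[OF _ _ elim(1)] by blast
      then show ?case by (rule le_larger_constant) (use C in auto)
    qed
  qed
qed

lemma Phi_bound_positive_compact:
  fixes psi :: "real \<Rightarrow> 'x::finite \<Rightarrow> 'x \<Rightarrow> real"
  assumes H: "H1 psi psib" and K: "compact K" and pos: "\<forall>b s s'. 0 < psi b s s'"
  shows "\<exists>C0. \<forall>C\<ge>C0. \<forall>(b, B)\<in>K. \<forall>h. is_message h \<longrightarrow> (\<forall>G r. is_lf_tree G r \<longrightarrow>
     \<bar>Phi psi psib b B h G r\<bar> \<le> C * (real (deg G r) + 1))"
proof -
  obtain sp M m lo hi where sb: "\<forall>(b, B)\<in>K. spec_bounds psi psib b B sp M m lo hi"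
    using H1_spec_bounds[OF H K] by blast
  obtain mm where mm: "0 < mm" "mm \<le> 1" "\<forall>(b, B)\<in>K. \<forall>s s'. mm \<le> psi b s s'"
    using H1_uniform_positivity[OF H K pos] by blast
  define C0 where "C0 = log_spread TYPE('x) M m lo hi + (ln M - ln mm)"
  have bound: "\<bar>Phi psi psib b B h G r\<bar> \<le> C0 * (real (deg G r) + 1)"
    if "(b, B) \<in> K" "is_message h" "is_lf_tree G r" for b B h G r
    unfolding C0_def
  proof (rule Phi_bound_positive)
    show "\<forall>x y. prob_vector (h G x y)" using that message_prob_vector by blast
    show "finite (nbrs G r)" using that comp_refl unfolding is_lf_tree_def by blast
  qed (use that sb mm in auto)
  show ?thesis
  proof (intro exI[of _ C0] allI impI ballI, clarify)
    fix C b B and h :: "graph \<Rightarrow> nat \<Rightarrow> nat \<Rightarrow> 'x \<Rightarrow> real" and G r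
    assume "C0 \<le> C" "(b, B) \<in> K" "is_message h" "is_lf_tree G r"
    then show "\<bar>Phi psi psib b B h G r\<bar> \<le> C * (real (deg G r) + 1)"
      by (intro le_larger_constant[OF bound]) auto
  qed
qed

lemma Phi_mu_uniform_bound:
  assumes U: "unimod_prob_on_trees \<mu>" and g: "integrable \<mu> g"
    and bound: "\<And>b B h. (b, B) \<in> K \<Longrightarrow> h \<in> Hs b B \<Longrightarrow>
       is_message h \<and> (AE z in \<mu>. \<bar>Phi psi psib b B h (fst z) (snd z)\<bar> \<le> c * (g z + 1))"
  shows "\<exists>C'. \<forall>(b, B)\<in>K. \<forall>h\<in>Hs b B.
     integrable \<mu> (\<lambda>z. Phi psi psib b B h (fst z) (snd z)) \<and> \<bar>Phi_mu \<mu> psi psib b B h\<bar> \<le> C'"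
proof -
  have P: "prob_space \<mu>" and sets: "sets \<mu> = sets rgraph_space"
    using U unfolding unimod_prob_on_trees_def by auto
  have "integrable \<mu> (\<lambda>z. Phi psi psib b B h (fst z) (snd z)) \<and>
      \<bar>Phi_mu \<mu> psi psib b B h\<bar> \<le> c * integral\<^sup>L \<mu> g + c"
    if "(b, B) \<in> K" "h \<in> Hs b B" for b B h
  proof -
    have msg: "is_message h"
      and AE_bound: "AE z in \<mu>. \<bar>Phi psi psib b B h (fst z) (snd z)\<bar> \<le> c * (g z + 1)"
      using bound[OF that] by auto
    have "(\<lambda>z. Phi psi psib b B h (fst z) (snd z)) \<in> borel_measurable \<mu>"
      using measurable_Phi[OF msg] unfolding measurable_cong_sets[OF sets refl] .
    then show ?thesis unfolding Phi_mu_def by (rule integrable_bound_by_moment[OF P g _ AE_bound])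
  qed
  then show ?thesis by (intro exI[of _ "c * integral\<^sup>L \<mu> g + c"]) auto
qed

lemma Phi_mu_bound_Hstar:
  fixes psi :: "real \<Rightarrow> 'x::finite \<Rightarrow> 'x \<Rightarrow> real"
  assumes H: "H1 psi psib" and U: "unimod_prob_on_trees \<mu>" and K: "compact K"
  shows "integrable \<mu> (\<lambda>z. real (deg (fst z) (snd z))^2) \<longrightarrow>
    (\<exists>C'. \<forall>(b, B)\<in>K. \<forall>h\<in>Hstar \<mu> psi psib b B.
       integrable \<mu> (\<lambda>z. Phi psi psib b B h (fst z) (snd z)) \<and> \<bar>Phi_mu \<mu> psi psib b B h\<bar> \<le> C')"
proof
  assume g: "integrable \<mu> (\<lambda>z. real (deg (fst z) (snd z))^2)"
  obtain Ca where bound: "\<forall>C\<ge>Ca. \<forall>(b, B)\<in>K. \<forall>h\<in>Hstar \<mu> psi psib b B.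
      AE z in \<mu>. \<bar>Phi psi psib b B h (fst z) (snd z)\<bar> \<le> C * (real (deg (fst z) (snd z))^2 + 1)"
    using Phi_bound_Hstar_compact[OF H U K] by blast
  show "\<exists>C'. \<forall>(b, B)\<in>K. \<forall>h\<in>Hstar \<mu> psi psib b B.
      integrable \<mu> (\<lambda>z. Phi psi psib b B h (fst z) (snd z)) \<and> \<bar>Phi_mu \<mu> psi psib b B h\<bar> \<le> C'"
  proof (rule Phi_mu_uniform_bound[OF U g, where c=Ca])
    fix b B and h :: "graph \<Rightarrow> nat \<Rightarrow> nat \<Rightarrow> 'x \<Rightarrow> real"
    assume "(b, B) \<in> K" "h \<in> Hstar \<mu> psi psib b B"
    then show "is_message h \<and> (AE z in \<mu>. \<bar>Phi psi psib b B h (fst z) (snd z)\<bar>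
        \<le> Ca * (real (deg (fst z) (snd z))^2 + 1))"
      using bound unfolding Hstar_def by fastforce
  qed
qed

lemma Phi_mu_bound_positive:
  fixes psi :: "real \<Rightarrow> 'x::finite \<Rightarrow> 'x \<Rightarrow> real"
  assumes H: "H1 psi psib" and U: "unimod_prob_on_trees \<mu>" and K: "compact K"
  shows "(\<forall>b s s'. 0 < psi b s s') \<longrightarrow> integrable \<mu> (\<lambda>z. real (deg (fst z) (snd z))) \<longrightarrow>
    (\<exists>C'. \<forall>(b, B)\<in>K. \<forall>h. is_message h \<longrightarrow>
       integrable \<mu> (\<lambda>z. Phi psi psib b B h (fst z) (snd z)) \<and> \<bar>Phi_mu \<mu> psi psib b B h\<bar> \<le> C')"
proof (intro impI)
  assume pos: "\<forall>b s s'. 0 < psi b s s'" and g: "integrable \<mu> (\<lambda>z. real (deg (fst z) (snd z)))"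
  obtain Cb where bound: "\<forall>C\<ge>Cb. \<forall>(b, B)\<in>K. \<forall>h. is_message h \<longrightarrow>
      (\<forall>G r. is_lf_tree G r \<longrightarrow> \<bar>Phi psi psib b B h G r\<bar> \<le> C * (real (deg G r) + 1))"
    using Phi_bound_positive_compact[OF H K pos] by blast
  have trees: "AE z in \<mu>. is_lf_tree (fst z) (snd z)"
    using U unfolding unimod_prob_on_trees_def by blast
  have "\<exists>C'. \<forall>(b, B)\<in>K. \<forall>h\<in>{h. is_message h}.
      integrable \<mu> (\<lambda>z. Phi psi psib b B h (fst z) (snd z)) \<and> \<bar>Phi_mu \<mu> psi psib b B h\<bar> \<le> C'"
  proof (rule Phi_mu_uniform_bound[OF U g, where c=Cb])
    fix b B and h :: "graph \<Rightarrow> nat \<Rightarrow> nat \<Rightarrow> 'x \<Rightarrow> real"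
    assume "(b, B) \<in> K" and msg: "h \<in> {h. is_message h}"
    then have "\<forall>G r. is_lf_tree G r \<longrightarrow> \<bar>Phi psi psib b B h G r\<bar> \<le> Cb * (real (deg G r) + 1)"
      using bound by fastforce
    then have "AE z in \<mu>. \<bar>Phi psi psib b B h (fst z) (snd z)\<bar> \<le> Cb * (real (deg (fst z) (snd z)) + 1)"
      using trees by (auto elim: AE_mp)
    then show "is_message h \<and> (AE z in \<mu>. \<bar>Phi psi psib b B h (fst z) (snd z)\<bar>
        \<le> Cb * (real (deg (fst z) (snd z)) + 1))"
      using msg by simp
  qed
  then show "\<exists>C'. \<forall>(b, B)\<in>K. \<forall>h. is_message h \<longrightarrow>
      integrable \<mu> (\<lambda>z. Phi psi psib b B h (fst z) (snd z)) \<and> \<bar>Phi_mu \<mu> psi psib b B h\<bar> \<le> C'"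
    by blast
qed

theorem mainTheorem9:
  fixes psi :: "real \<Rightarrow> 'x::finite \<Rightarrow> 'x \<Rightarrow> real"
    and psib :: "real \<Rightarrow> 'x \<Rightarrow> real"
    and \<mu> :: "(graph \<times> nat) measure"
    and K :: "(real \<times> real) set"
  assumes "H1 psi psib"
    and "unimod_prob_on_trees \<mu>"
    and "compact K"
  shows "\<exists>C::real.
     (\<forall>(b, B)\<in>K. \<forall>h\<in>Hstar \<mu> psi psib b B.
        AE z in \<mu>. \<bar>Phi psi psib b B h (fst z) (snd z)\<bar> \<le> C * (real (deg (fst z) (snd z))^2 + 1)) \<and>
     ((\<forall>b s s'. 0 < psi b s s') \<longrightarrow>
        (\<forall>(b, B)\<in>K. \<forall>h. is_message h \<longrightarrow> (\<forall>G r. is_lf_tree G r \<longrightarrow>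
           \<bar>Phi psi psib b B h G r\<bar> \<le> C * (real (deg G r) + 1)))) \<and>
     (integrable \<mu> (\<lambda>z. real (deg (fst z) (snd z))^2) \<longrightarrow>
        (\<exists>C'::real. \<forall>(b, B)\<in>K. \<forall>h\<in>Hstar \<mu> psi psib b B.
           integrable \<mu> (\<lambda>z. Phi psi psib b B h (fst z) (snd z)) \<and> \<bar>Phi_mu \<mu> psi psib b B h\<bar> \<le> C')) \<and>
     ((\<forall>b s s'. 0 < psi b s s') \<longrightarrow> integrable \<mu> (\<lambda>z. real (deg (fst z) (snd z))) \<longrightarrow>
        (\<exists>C'::real. \<forall>(b, B)\<in>K. \<forall>h. is_message h \<longrightarrow>
           integrable \<mu> (\<lambda>z. Phi psi psib b B h (fst z) (snd z)) \<and> \<bar>Phi_mu \<mu> psi psib b B h\<bar> \<le> C'))"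
proof -
  obtain Ca where "\<forall>C\<ge>Ca. \<forall>(b, B)\<in>K. \<forall>h\<in>Hstar \<mu> psi psib b B.
      AE z in \<mu>. \<bar>Phi psi psib b B h (fst z) (snd z)\<bar> \<le> C * (real (deg (fst z) (snd z))^2 + 1)"
    using Phi_bound_Hstar_compact[OF assms] by blast
  moreover obtain Cb where "(\<forall>b s s'. 0 < psi b s s') \<longrightarrow> (\<forall>C\<ge>Cb. \<forall>(b, B)\<in>K. \<forall>h. is_message h \<longrightarrow>
      (\<forall>G r. is_lf_tree G r \<longrightarrow> \<bar>Phi psi psib b B h G r\<bar> \<le> C * (real (deg G r) + 1)))"
    using Phi_bound_positive_compact[OF assms(1,3)] by blast
  ultimately show ?thesis
    using Phi_mu_bound_Hstar[OF assms] Phi_mu_bound_positive[OF assms]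
    by (intro exI[of _ "max Ca Cb"]) auto
qed

end
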